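(* For every $\delta\in(0,1)$ there exists $c(\delta)>0$ such that the following holds. Let $N\in\mathbb N$, let $p_1,\dots,p_N\in[0,1/2]$, and let $\Omega$ be a random subset of $\{1,\dots,N\}$ in which each $i$ belongs to $\Omega$ independently of the others with probability $p_i$. Let $\omega:=\mathbb E\#\Omega=\sum_{i=1}^N p_i$ and suppose $\omega\ge c(\delta)$. Then, with $\mathcal R$ the event $\{(1-\delta)\omega\le\#\Omega\le 5\omega\}$, $$\mathbb E(\#\Omega\mid\mathcal R)\ge\mathbb E\#\Omega.$$
   Context: $\#\Omega$ denotes the cardinality of $\Omega$. *)

theory Defs
  imports Complex_Main
begin

text \<open>Random subset Omega of {1..N}: each i is included independently with probability p i.
  The probability that Omega equals a given subset S of {1..N}.\<close>
definition rand_subset_prob :: "nat \<Rightarrow> (nat \<Rightarrow> real) \<Rightarrow> nat set \<Rightarrow> real" where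
  "rand_subset_prob N p S = (\<Prod>i\<in>S. p i) * (\<Prod>i\<in>{1..N} - S. 1 - p i)"

definition rs_prob :: "nat \<Rightarrow> (nat \<Rightarrow> real) \<Rightarrow> (nat set \<Rightarrow> bool) \<Rightarrow> real" where
  "rs_prob N p E = (\<Sum>S\<in>Pow {1..N}. if E S then rand_subset_prob N p S else 0)"

definition rs_card_exp_on :: "nat \<Rightarrow> (nat \<Rightarrow> real) \<Rightarrow> (nat set \<Rightarrow> bool) \<Rightarrow> real" where
  "rs_card_exp_on N p E = (\<Sum>S\<in>Pow {1..N}. if E S then real (card S) * rand_subset_prob N p S else 0)"

definition rs_card_exp :: "nat \<Rightarrow> (nat \<Rightarrow> real) \<Rightarrow> real" where
  "rs_card_exp N p = rs_card_exp_on N p (\<lambda>_. True)"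

definition rs_cond_card_exp :: "nat \<Rightarrow> (nat \<Rightarrow> real) \<Rightarrow> (nat set \<Rightarrow> bool) \<Rightarrow> real" where
  "rs_cond_card_exp N p E = rs_card_exp_on N p E / rs_prob N p E"

end

theory Submission
  imports Defs
begin

(* Write F for the law of the random subset and omega for its mean. Since the total mass of
   (#S - omega) F S vanishes, it suffices that its mass outside R is negative. Outside R this mass
   is at most -omega F {} (the empty set lies below R, and every other set below R contributes
   nonpositively) plus the upper tail E(#S; #S > 5 omega). The empty set has probability at least
   exp (-2 omega), while an exponential moment bound gives exp (-9 omega / 4) for the tail, so for
   omega >= 2 the empty set wins; thus c = 2 works for every delta. *)

lemma rand_subset_prob_nonneg:
  assumes "\<And>i. i \<in> {1..N} \<Longrightarrow> 0 \<le> p i \<and> p i \<le> 1" and "S \<subseteq> {1..N}"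
  shows "0 \<le> rand_subset_prob N p S"
  unfolding rand_subset_prob_def using assms
  by (intro mult_nonneg_nonneg prod_nonneg) force+

lemma sum_power_card_rand_subset_prob:
  fixes a :: real
  shows "(\<Sum>S\<in>Pow {1..N}. a ^ card S * rand_subset_prob N p S) = (\<Prod>i\<in>{1..N}. a * p i + (1 - p i))"
proof -
  have "(\<Prod>i\<in>{1..N}. a * p i + (1 - p i)) =
      (\<Sum>S\<in>Pow {1..N}. (\<Prod>i\<in>S. a * p i) * (\<Prod>i\<in>{1..N} - S. 1 - p i))"
    by (rule prod_add) simp
  also have "\<dots> = (\<Sum>S\<in>Pow {1..N}. a ^ card S * rand_subset_prob N p S)"
    by (rule sum.cong) (auto simp: rand_subset_prob_def prod.distrib)
  finally show ?thesis by simp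
qed

lemma sum_rand_subset_prob: "(\<Sum>S\<in>Pow {1..N}. rand_subset_prob N p S) = 1"
  using sum_power_card_rand_subset_prob[of 1 N p] by simp

lemma sum_rand_subset_prob_mem:
  assumes i: "i \<in> {1..N}"
  shows "(\<Sum>S\<in>Pow {1..N}. if i \<in> S then rand_subset_prob N p S else 0) = p i"
proof -
  define q where "q j = (if j = i then 0 else 1 - p j)" for j
  \<comment> \<open>Replacing the factor 1 - p i by 0 kills exactly the sets that miss i.\<close>
  have "(\<Sum>S\<in>Pow {1..N}. if i \<in> S then rand_subset_prob N p S else 0) =
      (\<Sum>S\<in>Pow {1..N}. (\<Prod>j\<in>S. p j) * (\<Prod>j\<in>{1..N} - S. q j))"
  proof (rule sum.cong)
    fix S assume "S \<in> Pow {1..N}"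
    show "(if i \<in> S then rand_subset_prob N p S else 0) = (\<Prod>j\<in>S. p j) * (\<Prod>j\<in>{1..N} - S. q j)"
    proof (cases "i \<in> S")
      case True
      then have "(\<Prod>j\<in>{1..N} - S. q j) = (\<Prod>j\<in>{1..N} - S. 1 - p j)"
        by (intro prod.cong) (auto simp: q_def)
      with True show ?thesis by (simp add: rand_subset_prob_def)
    next
      case False
      then have "(\<Prod>j\<in>{1..N} - S. q j) = 0"
        using i by (intro prod_zero) (auto simp: q_def)
      with False show ?thesis by simp
    qed
  qed simp
  also have "\<dots> = (\<Prod>j\<in>{1..N}. p j + q j)"
    by (rule prod_add [symmetric]) simp
  also have "\<dots> = (\<Prod>j\<in>{1..N}. if j = i then p i else 1)"
    by (rule prod.cong) (auto simp: q_def)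
  also have "\<dots> = p i"
    using i by (simp add: prod.delta)
  finally show ?thesis .
qed

lemma sum_card_rand_subset_prob:
  "(\<Sum>S\<in>Pow {1..N}. real (card S) * rand_subset_prob N p S) = (\<Sum>i=1..N. p i)"
proof -
  have "(\<Sum>S\<in>Pow {1..N}. real (card S) * rand_subset_prob N p S) =
      (\<Sum>S\<in>Pow {1..N}. \<Sum>i=1..N. if i \<in> S then rand_subset_prob N p S else 0)"
  proof (rule sum.cong)
    fix S assume "S \<in> Pow {1..N}"
    then have "{1..N} \<inter> S = S" by auto
    then show "real (card S) * rand_subset_prob N p S =
        (\<Sum>i=1..N. if i \<in> S then rand_subset_prob N p S else 0)"
      by (simp add: sum.inter_restrict [symmetric])
  qed simp
  also have "\<dots> = (\<Sum>i=1..N. \<Sum>S\<in>Pow {1..N}. if i \<in> S then rand_subset_prob N p S else 0)"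
    by (rule sum.swap)
  also have "\<dots> = (\<Sum>i=1..N. p i)"
    by (intro sum.cong refl sum_rand_subset_prob_mem)
  finally show ?thesis .
qed

lemma rs_card_exp_eq: "rs_card_exp N p = (\<Sum>i=1..N. p i)"
  unfolding rs_card_exp_def rs_card_exp_on_def by (simp only: if_True sum_card_rand_subset_prob)

lemma rand_subset_prob_empty_ge:
  assumes "\<And>i. i \<in> {1..N} \<Longrightarrow> 0 \<le> p i \<and> p i \<le> 1/2"
  shows "exp (-2 * (\<Sum>i=1..N. p i)) \<le> rand_subset_prob N p {}"
proof -
  have "exp (-2 * (\<Sum>i=1..N. p i)) = (\<Prod>i=1..N. exp (-2 * p i))"
    by (simp add: sum_distrib_left exp_sum)
  also have "\<dots> \<le> (\<Prod>i=1..N. 1 - p i)"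
  proof (rule prod_mono)
    fix i assume "i \<in> {1..N}"
    then have p: "0 \<le> p i" "p i \<le> 1/2" using assms by auto
    have "-2 * p i \<le> - p i - 2 * (p i)\<^sup>2"
      using p mult_left_mono[of "p i" "1/2" "p i"] by (simp add: power2_eq_square)
    also have "\<dots> \<le> ln (1 - p i)"
      using p by (rule ln_one_minus_pos_lower_bound)
    finally show "0 \<le> exp (-2 * p i) \<and> exp (-2 * p i) \<le> 1 - p i"
      using p by (simp add: ln_ge_iff)
  qed
  finally show ?thesis by (simp add: rand_subset_prob_def)
qed

lemma real_le_two_times_five_quarters_pow: "real n \<le> 2 * (5/4) ^ n"
proof (induction n rule: less_induct)
  case (less n)
  show ?case
  proof (cases "n \<le> 4")
    case True
    then have "n \<in> {0, 1, 2, 3, 4}" by auto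
    then show ?thesis by (auto simp: eval_nat_numeral)
  next
    case False
    then obtain m where m: "n = Suc m" "4 \<le> m" by (cases n) auto
    then have "real m \<le> 2 * (5/4) ^ m" using less by simp
    moreover have "real n \<le> 5/4 * real m" using m by simp
    ultimately show ?thesis using m by simp
  qed
qed

lemma upper_tail_sum_card_rand_subset_prob_le:
  fixes p :: "nat \<Rightarrow> real"
  assumes p: "\<And>i. i \<in> {1..N} \<Longrightarrow> 0 \<le> p i \<and> p i \<le> 1"
  defines "\<omega> \<equiv> \<Sum>i=1..N. p i"
  shows "(\<Sum>S\<in>Pow {1..N}. if 5 * \<omega> < card S then real (card S) * rand_subset_prob N p S else 0)
    \<le> 2 * exp (-(9/4) * \<omega>)"
proof -
  let ?F = "rand_subset_prob N p"
  define a where "a = 5/4 * exp (1::real)"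
  have a: "1 \<le> a" "a \<le> 15/4"
    using exp_ge_add_one_self[of 1] exp_le by (auto simp: a_def)
  have \<omega>_nonneg: "0 \<le> \<omega>" unfolding \<omega>_def using p by (intro sum_nonneg) auto
  \<comment> \<open>Exponential moment with base a: on the tail, #S \<le> 2 (5/4)^#S and 1 \<le> exp (#S - 5\<omega>).\<close>
  have tail: "real k \<le> 2 * exp (-5 * \<omega>) * a ^ k" if "5 * \<omega> < k" for k
  proof -
    have exp_k: "exp (real k - 5 * \<omega>) = exp 1 ^ k * exp (-5 * \<omega>)"
      using exp_add[of "real k" "-5 * \<omega>"] exp_of_nat_mult[of k 1] by simp
    have "real k \<le> 2 * (5/4) ^ k"
      by (rule real_le_two_times_five_quarters_pow)
    also have "\<dots> \<le> 2 * (5/4) ^ k * exp (real k - 5 * \<omega>)"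
      using that by simp
    also have "\<dots> = 2 * exp (-5 * \<omega>) * a ^ k"
      unfolding a_def power_mult_distrib exp_k by (simp only: mult_ac)
    finally show ?thesis .
  qed
  have "(\<Sum>S\<in>Pow {1..N}. if 5 * \<omega> < card S then real (card S) * ?F S else 0)
      \<le> (\<Sum>S\<in>Pow {1..N}. 2 * exp (-5 * \<omega>) * (a ^ card S * ?F S))"
  proof (rule sum_mono)
    fix S assume "S \<in> Pow {1..N}"
    then have "0 \<le> ?F S" using p by (intro rand_subset_prob_nonneg) auto
    then show "(if 5 * \<omega> < card S then real (card S) * ?F S else 0) \<le> 2 * exp (-5 * \<omega>) * (a ^ card S * ?F S)"
      using tail[of "card S"] a by (auto simp: mult.assoc [symmetric] intro: mult_right_mono)
  qed
  also have "\<dots> = 2 * exp (-5 * \<omega>) * (\<Prod>i=1..N. a * p i + (1 - p i))"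
    by (simp only: sum_distrib_left [symmetric] sum_power_card_rand_subset_prob)
  also have "\<dots> \<le> 2 * exp (-5 * \<omega>) * (\<Prod>i=1..N. exp ((a - 1) * p i))"
  proof (intro mult_left_mono prod_mono conjI)
    fix i assume "i \<in> {1..N}"
    then have "0 \<le> p i" "p i \<le> 1" using p by auto
    then show "0 \<le> a * p i + (1 - p i)"
      using a by simp
    show "a * p i + (1 - p i) \<le> exp ((a - 1) * p i)"
      using exp_ge_add_one_self[of "(a - 1) * p i"] by (simp add: algebra_simps)
  qed simp
  also have "\<dots> = 2 * exp (-5 * \<omega>) * exp ((a - 1) * \<omega>)"
    by (simp add: \<omega>_def exp_sum sum_distrib_left)
  also have "\<dots> = 2 * exp ((a - 6) * \<omega>)"
    by (simp add: mult.assoc flip: exp_add) (simp add: algebra_simps)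
  also have "\<dots> \<le> 2 * exp (-(9/4) * \<omega>)"
    using mult_right_mono[of "a - 6" "-(9/4)" \<omega>] a \<omega>_nonneg by simp
  finally show ?thesis .
qed

lemma two_exp_lt_mult_exp:
  fixes \<omega> :: real
  assumes "2 \<le> \<omega>"
  shows "2 * exp (-(9/4) * \<omega>) < \<omega> * exp (-2 * \<omega>)"
proof -
  have "2 < \<omega> * (1 + \<omega>/4)"
    using assms mult_mono[of 2 \<omega> "3/2" "1 + \<omega>/4"] by simp
  also have "\<dots> \<le> \<omega> * exp (\<omega>/4)"
    using assms exp_ge_add_one_self[of "\<omega>/4"] by (intro mult_left_mono) auto
  finally have "2 * exp (-(9/4) * \<omega>) < \<omega> * exp (\<omega>/4) * exp (-(9/4) * \<omega>)"
    by simp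
  then show ?thesis
    by (simp add: mult.assoc flip: exp_add)
qed

lemma rs_prob_nonneg:
  assumes "\<And>i. i \<in> {1..N} \<Longrightarrow> 0 \<le> p i \<and> p i \<le> 1"
  shows "0 \<le> rs_prob N p E"
  unfolding rs_prob_def using rand_subset_prob_nonneg[of N p, OF assms]
  by (intro sum_nonneg) simp

lemma rs_card_exp_on_le_mult_rs_prob:
  assumes "\<And>i. i \<in> {1..N} \<Longrightarrow> 0 \<le> p i \<and> p i \<le> 1"
  shows "rs_card_exp_on N p E \<le> real N * rs_prob N p E"
  unfolding rs_card_exp_on_def rs_prob_def sum_distrib_left
proof (rule sum_mono)
  fix S assume S: "S \<in> Pow {1..N}"
  then have "card S \<le> N" using card_mono[of "{1..N}" S] by auto
  moreover have "0 \<le> rand_subset_prob N p S" using rand_subset_prob_nonneg[of N p, OF assms] S by blast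
  ultimately show "(if E S then real (card S) * rand_subset_prob N p S else 0)
      \<le> real N * (if E S then rand_subset_prob N p S else 0)"
    by (simp add: mult_right_mono)
qed

lemma rs_cond_card_exp_gt:
  assumes "\<And>i. i \<in> {1..N} \<Longrightarrow> 0 \<le> p i \<and> p i \<le> 1"
    and "c * rs_prob N p E < rs_card_exp_on N p E"
  shows "c < rs_cond_card_exp N p E"
proof -
  have "rs_prob N p E \<noteq> 0"
    using assms rs_card_exp_on_le_mult_rs_prob[of N p E] by auto
  then have "0 < rs_prob N p E"
    using rs_prob_nonneg[of N p E] assms(1) by simp
  then show ?thesis
    using assms(2) by (simp add: rs_cond_card_exp_def pos_less_divide_eq)
qed

lemma mean_mult_rs_prob_lt_rs_card_exp_on:
  fixes p :: "nat \<Rightarrow> real"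
  assumes p: "\<And>i. i \<in> {1..N} \<Longrightarrow> 0 \<le> p i \<and> p i \<le> 1/2"
  defines "\<omega> \<equiv> \<Sum>i=1..N. p i"
  assumes "2 \<le> \<omega>" and "\<not> E {}"
    and window: "\<And>S. \<omega> < real (card S) \<Longrightarrow> real (card S) \<le> 5 * \<omega> \<Longrightarrow> E S"
  shows "\<omega> * rs_prob N p E < rs_card_exp_on N p E"
proof -
  let ?F = "rand_subset_prob N p"
  let ?dev = "\<lambda>S. (real (card S) - \<omega>) * ?F S"
  let ?tail = "\<lambda>S. if 5 * \<omega> < card S then real (card S) * ?F S else 0"
  have p1: "\<And>i. i \<in> {1..N} \<Longrightarrow> 0 \<le> p i \<and> p i \<le> 1"
    using p by fastforce
  have F: "0 \<le> ?F S" if "S \<in> Pow {1..N}" for S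
    using rand_subset_prob_nonneg[of N p, OF p1] that by blast
  have "(\<Sum>S\<in>Pow {1..N}. ?dev S) =
      (\<Sum>S\<in>Pow {1..N}. real (card S) * ?F S) - \<omega> * (\<Sum>S\<in>Pow {1..N}. ?F S)"
    by (simp add: left_diff_distrib sum_subtractf sum_distrib_left)
  also have "\<dots> = 0"
    unfolding sum_card_rand_subset_prob sum_rand_subset_prob \<omega>_def by simp
  finally have centered: "(\<Sum>S\<in>Pow {1..N}. if E S then ?dev S else 0)
      + (\<Sum>S\<in>Pow {1..N}. if E S then 0 else ?dev S) = 0"
    by (simp add: if_distrib flip: sum.distrib cong: if_cong)
  have "0 < \<omega> * exp (-2 * \<omega>) - 2 * exp (-(9/4) * \<omega>)"
    using two_exp_lt_mult_exp[OF \<open>2 \<le> \<omega>\<close>] by simp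
  also have "\<dots> \<le> \<omega> * ?F {} - (\<Sum>S\<in>Pow {1..N}. ?tail S)"
  proof -
    have "\<omega> * exp (-2 * \<omega>) \<le> \<omega> * ?F {}"
      using rand_subset_prob_empty_ge[of N p, OF p] \<open>2 \<le> \<omega>\<close>
      by (intro mult_left_mono) (simp_all add: \<omega>_def)
    moreover have "(\<Sum>S\<in>Pow {1..N}. ?tail S) \<le> 2 * exp (-(9/4) * \<omega>)"
      using upper_tail_sum_card_rand_subset_prob_le[of N p, OF p1] by (simp add: \<omega>_def)
    ultimately show ?thesis by linarith
  qed
  also have "\<dots> = - (\<Sum>S\<in>Pow {1..N}. (if S = {} then - \<omega> * ?F S else 0) + ?tail S)"
    by (simp add: sum.distrib)
  also have "\<dots> \<le> - (\<Sum>S\<in>Pow {1..N}. if E S then 0 else ?dev S)"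
  proof (intro le_imp_neg_le sum_mono)
    fix S assume "S \<in> Pow {1..N}"
    show "(if E S then 0 else ?dev S) \<le> (if S = {} then - \<omega> * ?F S else 0) + ?tail S"
      using window[of S] \<open>\<not> E {}\<close> \<open>2 \<le> \<omega>\<close> F[OF \<open>S \<in> Pow {1..N}\<close>]
      by (auto simp: mult_le_0_iff mult_right_mono)
  qed
  also have "\<dots> = (\<Sum>S\<in>Pow {1..N}. if E S then ?dev S else 0)"
    using centered by simp
  also have "\<dots> = rs_card_exp_on N p E - \<omega> * rs_prob N p E"
    unfolding rs_card_exp_on_def rs_prob_def sum_distrib_left sum_subtractf [symmetric]
    by (intro sum.cong) (auto simp: left_diff_distrib)
  finally show ?thesis by simp
qed

theorem lemma2:
  shows "\<forall>\<delta>::real. 0 < \<delta> \<and> \<delta> < 1 \<longrightarrow>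
    (\<exists>c>0. \<forall>(N::nat) (p::nat \<Rightarrow> real).
       (\<forall>i\<in>{1..N}. 0 \<le> p i \<and> p i \<le> 1/2) \<longrightarrow>
       (\<Sum>i=1..N. p i) \<ge> c \<longrightarrow>
       (let \<omega> = (\<Sum>i=1..N. p i);
            R = (\<lambda>S. (1 - \<delta>) * \<omega> \<le> real (card S) \<and> real (card S) \<le> 5 * \<omega>)
        in rs_cond_card_exp N p R \<ge> rs_card_exp N p))"
proof (intro allI impI exI [of _ 2] conjI)
  fix \<delta> :: real and N :: nat and p :: "nat \<Rightarrow> real"
  assume \<delta>: "0 < \<delta> \<and> \<delta> < 1" and p: "\<forall>i\<in>{1..N}. 0 \<le> p i \<and> p i \<le> 1/2"
    and large: "(\<Sum>i=1..N. p i) \<ge> 2"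
  define \<omega> where "\<omega> = (\<Sum>i=1..N. p i)"
  define R where "R S \<longleftrightarrow> (1 - \<delta>) * \<omega> \<le> real (card S) \<and> real (card S) \<le> 5 * \<omega>" for S :: "nat set"
  have "2 \<le> \<omega>"
    using large by (simp add: \<omega>_def)
  then have pos: "0 < (1 - \<delta>) * \<omega>" and below: "(1 - \<delta>) * \<omega> < \<omega>"
    using \<delta> mult_strict_right_mono[of "1 - \<delta>" 1 \<omega>] by simp_all
  have "\<not> R {}"
    using pos by (simp add: R_def)
  moreover have "R S" if "\<omega> < real (card S)" "real (card S) \<le> 5 * \<omega>" for S
    unfolding R_def using that below by (intro conjI) linarith+
  ultimately have "\<omega> * rs_prob N p R < rs_card_exp_on N p R"
    using p \<open>2 \<le> \<omega>\<close> unfolding \<omega>_def by (intro mean_mult_rs_prob_lt_rs_card_exp_on) blast+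
  then have "\<omega> < rs_cond_card_exp N p R"
    using p by (intro rs_cond_card_exp_gt) force+
  then show "let \<omega> = (\<Sum>i=1..N. p i);
      R = (\<lambda>S. (1 - \<delta>) * \<omega> \<le> real (card S) \<and> real (card S) \<le> 5 * \<omega>)
    in rs_cond_card_exp N p R \<ge> rs_card_exp N p"
    by (simp add: rs_card_exp_eq Let_def R_def [abs_def] \<omega>_def)
qed simp

end
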